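(* With $A_1[n]$ defined below, for $n=1,2,\dots$, $$A_1[n]=\frac{n+1}{18}\binom{3n+4}{n+1}\Bigl(F(1,-n-1;2n+4;-2)-\frac{4n+6}{3n+4}\Bigr),$$ where $F(a,b;c;z)$ is the Gauss hypergeometric function.
   Context: $A_0(z)$ is the unique function holomorphic near $z=0$ with $A_0(0)=0$ and $z(1+A_0(z))^3=A_0(z)$, and $A_1(z)=-A_0(z)\left(\frac{1+A_0(z)}{1-2A_0(z)}\right)^4$. The numbers $A_1[n]$ are defined by $A_1(z)=-\sum_{n\ge1}A_1[n]z^n$. *)

theory Defs
  imports "HOL-Complex_Analysis.Complex_Analysis"
begin

text \<open>Gauss hypergeometric series F(a,b;c;z) = sum_k (a)_k (b)_k / ((c)_k k!) z^k.
  In the statement b is a negative integer, so the series terminates (polynomial).\<close>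
definition gauss_hyp :: "complex \<Rightarrow> complex \<Rightarrow> complex \<Rightarrow> complex \<Rightarrow> complex" where
  "gauss_hyp a b c z =
     (\<Sum>k. pochhammer a k * pochhammer b k / (pochhammer c k * fact k) * z ^ k)"

definition A1fun :: "(complex \<Rightarrow> complex) \<Rightarrow> complex \<Rightarrow> complex" where
  "A1fun A0 z = - A0 z * ((1 + A0 z) / (1 - 2 * A0 z)) ^ 4"

text \<open>A_1(z) = - sum_{n>=1} A_1[n] z^n, i.e. A_1[n] = - (n-th Taylor coefficient of A_1 at 0).\<close>
definition A1coeff :: "(complex \<Rightarrow> complex) \<Rightarrow> nat \<Rightarrow> complex" where
  "A1coeff A0 n = - ((deriv ^^ n) (A1fun A0) 0 / fact n)"

end

theory Submission
  imports Defs
begin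

(* Let T be the power series of A_0, so T = X (1 + T)^3. Lagrange inversion for T = X phi(T) with
   phi = (1 + X)^3 gives [X^n] H(T) = [X^n] H phi^(n-1) (phi - X phi'), and for
   H = X ((1 + X) / (1 - 2X))^4 this is the n-th coefficient of X (1 + X)^(3n+3) / (1 - 2X)^3.
   Since [X^n] (X P' - n P) = 0 for every P, a suitable P expresses 18 times that coefficient
   through [X^(n+1)] (1 + X)^(3n+4) / (1 - 2X) and binom(3n+3, n). The former coefficient is
   sum_k binom(3n+4, n+1-k) 2^k, which equals binom(3n+4, n+1) F(1, -n-1; 2n+4; -2) termwise. *)

unbundle no vec_syntax

lemma fps_X_mult_deriv_nth:
  "(fps_X * fps_deriv f) $ n = of_nat n * (f :: 'a::comm_ring_1 fps) $ n"
  by (cases n) simp_all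

lemma fps_nth_X_mult_deriv_minus:
  "(fps_X * fps_deriv f - of_nat n * f) $ n = (0 :: 'a::comm_ring_1)"
  by (cases n) (simp_all flip: fps_of_nat)

lemma fps_one_plus_X_power_nth: "((1 + fps_X) ^ m :: 'a::field_char_0 fps) $ k = of_nat (m choose k)"
  by (simp flip: fps_binomial_of_nat add: binomial_gbinomial)

lemma fps_inverse_one_minus_const_X: "inverse (1 - fps_const c * fps_X :: 'a::field fps) = Abs_fps (\<lambda>k. c ^ k)"
proof (rule fps_inverse_unique, rule fps_ext)
  fix k
  show "((1 - fps_const c * fps_X) * Abs_fps (\<lambda>k. c ^ k)) $ k = (1 :: 'a fps) $ k"
    by (cases k) (simp_all add: algebra_simps)
qed

lemma fps_one_plus_X_power_mult_geometric_nth: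
  "((1 + fps_X) ^ N * inverse (1 - fps_const c * fps_X) :: 'a::field_char_0 fps) $ m
    = (\<Sum>k\<le>m. of_nat (N choose (m - k)) * c ^ k)"
  unfolding fps_inverse_one_minus_const_X
  by (subst mult.commute) (simp add: fps_mult_nth fps_one_plus_X_power_nth atLeast0AtMost mult.commute)

lemma fps_nth_power_mult_Lagrange_factor:
  fixes \<phi> :: "'a::field_char_0 fps"
  assumes "m \<ge> 1"
  shows "(\<phi> ^ (m - 1) * (\<phi> - fps_X * fps_deriv \<phi>)) $ m = 0"
proof -
  obtain k where m: "m = Suc k"
    using assms by (cases m) auto
  have "fps_const (of_nat m) * (\<phi> ^ (m - 1) * (\<phi> - fps_X * fps_deriv \<phi>))
      = fps_const (of_nat m) * \<phi> ^ m - fps_X * fps_deriv (\<phi> ^ m)"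
    unfolding m fps_deriv_power by (simp add: algebra_simps)
  then have "of_nat m * (\<phi> ^ (m - 1) * (\<phi> - fps_X * fps_deriv \<phi>)) $ m
      = of_nat m * \<phi> ^ m $ m - (fps_X * fps_deriv (\<phi> ^ m)) $ m"
    by (metis fps_mult_left_const_nth fps_sub_nth)
  then have "of_nat m * (\<phi> ^ (m - 1) * (\<phi> - fps_X * fps_deriv \<phi>)) $ m = 0"
    by (simp only: fps_X_mult_deriv_nth diff_self)
  then show ?thesis
    using assms by simp
qed

lemma fps_compose_inverse_of_functional_equation:
  fixes \<phi> T :: "'a::field fps"
  assumes \<phi>0: "\<phi> $ 0 \<noteq> 0" and T0: "T $ 0 = 0" and T: "T = fps_X * (\<phi> oo T)"
  shows "T oo (fps_X * inverse \<phi>) = fps_X"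
proof -
  define V where "V = fps_inv T"
  have V0: "V $ 0 = 0"
    by (simp add: V_def fps_inv_def)
  have "T $ 1 = \<phi> $ 0"
    by (subst T) simp
  then have TV: "T oo V = fps_X"
    unfolding V_def using T0 \<phi>0 by (intro fps_inv_right) auto
  have "T oo V = V * (\<phi> oo (T oo V))"
    by (subst (1) T) (simp add: fps_compose_mult_distrib[OF V0] fps_compose_assoc[OF V0 T0] V0)
  then have "fps_X * inverse \<phi> = V * (\<phi> * inverse \<phi>)"
    by (simp add: TV mult.assoc)
  then show ?thesis
    using TV inverse_mult_eq_1'[OF \<phi>0] by simp
qed

lemma Lagrange_kernel_nth:
  fixes \<phi> :: "'a::field_char_0 fps"
  assumes \<phi>0: "\<phi> $ 0 \<noteq> 0" and "i \<le> n" and "n \<ge> 1"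
  shows "((fps_X * inverse \<phi>) ^ i * (\<phi> ^ (n - 1) * (\<phi> - fps_X * fps_deriv \<phi>))) $ n
    = (if i = n then 1 else 0)"
proof (cases "i = n")
  case True
  obtain k where n: "n = Suc k"
    using \<open>n \<ge> 1\<close> by (cases n) auto
  have "(fps_X * inverse \<phi>) ^ n * \<phi> ^ (n - 1) = fps_X ^ n * (inverse \<phi> * \<phi>) ^ k * inverse \<phi>"
    unfolding n by (simp add: power_mult_distrib ac_simps)
  also have "\<dots> = fps_X ^ n * inverse \<phi>"
    using \<phi>0 by (simp add: inverse_mult_eq_1)
  finally have kernel_eq: "(fps_X * inverse \<phi>) ^ n * (\<phi> ^ (n - 1) * (\<phi> - fps_X * fps_deriv \<phi>))
      = fps_X ^ n * (inverse \<phi> * (\<phi> - fps_X * fps_deriv \<phi>))"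
    by (simp only: mult.assoc[symmetric])
  show ?thesis
    unfolding True kernel_eq using \<phi>0 by (simp add: fps_X_power_mult_nth)
next
  case False
  define m where "m = n - i"
  have m: "m \<ge> 1" "n - 1 = i + (m - 1)"
    using False \<open>i \<le> n\<close> by (auto simp: m_def)
  have kernel_eq: "(fps_X * inverse \<phi>) ^ i * (\<phi> ^ (n - 1) * (\<phi> - fps_X * fps_deriv \<phi>))
      = fps_X ^ i * ((inverse \<phi> * \<phi>) ^ i * (\<phi> ^ (m - 1) * (\<phi> - fps_X * fps_deriv \<phi>)))"
    unfolding m(2) power_add by (simp add: power_mult_distrib ac_simps)
  have "(\<phi> ^ (m - 1) * (\<phi> - fps_X * fps_deriv \<phi>)) $ m = 0"
    using m(1) by (rule fps_nth_power_mult_Lagrange_factor)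
  then show ?thesis
    unfolding kernel_eq using False \<open>i \<le> n\<close> \<phi>0
    by (simp add: fps_X_power_mult_nth inverse_mult_eq_1 flip: m_def)
qed

theorem Lagrange_inversion:
  fixes \<phi> T H :: "'a::field_char_0 fps"
  assumes \<phi>0: "\<phi> $ 0 \<noteq> 0" and T0: "T $ 0 = 0" and T: "T = fps_X * (\<phi> oo T)" and "n \<ge> 1"
  shows "(H oo T) $ n = (H * (\<phi> ^ (n - 1) * (\<phi> - fps_X * fps_deriv \<phi>))) $ n"
proof -
  define U where "U = fps_X * inverse \<phi>"
  define K where "K = \<phi> ^ (n - 1) * (\<phi> - fps_X * fps_deriv \<phi>)"
  define c where "c = H oo T"
  have U0: "U $ 0 = 0"
    by (simp add: U_def)
  have "H = c oo U"
    using fps_compose_assoc[OF U0 T0, of H] fps_compose_inverse_of_functional_equation[OF \<phi>0 T0 T]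
    by (simp add: c_def U_def)
  then have H_nth: "H $ j = (\<Sum>i=0..n. c $ i * (U ^ i) $ j)" if "j \<le> n" for j
    using that startsby_zero_power_prefix[OF U0]
    by (simp add: fps_compose_nth) (intro sum.mono_neutral_left; auto)
  have "(H * K) $ n = (\<Sum>j=0..n. \<Sum>i=0..n. c $ i * ((U ^ i) $ j * K $ (n - j)))"
    by (simp add: fps_mult_nth H_nth sum_distrib_right mult.assoc)
  also have "\<dots> = (\<Sum>i=0..n. c $ i * (U ^ i * K) $ n)"
    by (subst sum.swap) (simp add: fps_mult_nth sum_distrib_left)
  also have "\<dots> = (\<Sum>i=0..n. c $ i * (if i = n then 1 else 0))"
    using Lagrange_kernel_nth[OF \<phi>0 _ \<open>n \<ge> 1\<close>] by (intro sum.cong refl) (simp add: U_def K_def)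
  also have "\<dots> = c $ n"
    by (simp add: if_distrib cong: if_cong)
  finally show ?thesis
    by (simp add: c_def K_def)
qed

lemma binomial_mult_binomial_shift:
  assumes "k \<le> m" "m \<le> N"
  shows "(N choose m) * (m choose k) = (N choose (m - k)) * ((N - m + k) choose k)"
proof -
  have "(N choose m) * (m choose k) = (N choose k) * ((N - k) choose (m - k))"
    using assms by (rule choose_mult)
  also have "\<dots> = (N choose (N - m + k)) * ((N - m + k) choose k)"
    using assms choose_mult[of k "N - m + k" N] binomial_symmetric[of "m - k" "N - k"]
    by (simp add: algebra_simps)
  also have "N choose (N - m + k) = N choose (m - k)"
    using assms binomial_symmetric[of "m - k" N] by simp
  finally show ?thesis .
qed

lemma pochhammer_neg_of_nat:
  "pochhammer (- of_nat m :: 'a::field_char_0) k = (- 1) ^ k * of_nat (m choose k) * fact k"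
proof -
  have "pochhammer (- of_nat m :: 'a) k = (- 1) ^ k * pochhammer (of_nat m - of_nat k + 1) k"
    by (rule pochhammer_minus)
  then show ?thesis
    by (simp add: gbinomial_pochhammer' binomial_gbinomial)
qed

lemma pochhammer_of_nat_add_one:
  "pochhammer (of_nat (a + 1) :: 'a::field_char_0) k = of_nat ((a + k) choose k) * fact k"
  using gbinomial_pochhammer'[of "of_nat (a + k) :: 'a" k] by (simp add: binomial_gbinomial field_simps)

lemma gauss_hyp_neg_of_nat:
  "gauss_hyp a (- of_nat m) c z
    = (\<Sum>k\<le>m. pochhammer a k * pochhammer (- of_nat m) k / (pochhammer c k * fact k) * z ^ k)"
  unfolding gauss_hyp_def by (rule suminf_finite) (auto simp: pochhammer_of_nat_eq_0_lemma)

lemma binomial_mult_gauss_hyp: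
  assumes "m \<le> N"
  shows "of_nat (N choose m) * gauss_hyp 1 (- of_nat m) (of_nat (N - m + 1)) z
    = (\<Sum>k\<le>m. of_nat (N choose (m - k)) * (- z) ^ k)"
  unfolding gauss_hyp_neg_of_nat sum_distrib_left
proof (rule sum.cong)
  fix k assume "k \<in> {..m}"
  then have binomials: "of_nat (N choose m) * of_nat (m choose k)
      = (of_nat (N choose (m - k)) * of_nat ((N - m + k) choose k) :: complex)"
    using assms by (simp flip: of_nat_mult add: binomial_mult_binomial_shift)
  have "of_nat (N choose m) *
      (pochhammer 1 k * pochhammer (- of_nat m) k / (pochhammer (of_nat (N - m + 1)) k * fact k) * z ^ k)
      = of_nat (N choose m) * of_nat (m choose k) / of_nat ((N - m + k) choose k) * (- z) ^ k"
    unfolding pochhammer_neg_of_nat pochhammer_of_nat_add_one pochhammer_fact[symmetric]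
    by (simp add: power_minus' field_simps)
  also have "\<dots> = of_nat (N choose (m - k)) * (- z) ^ k"
    unfolding binomials by simp
  finally show "of_nat (N choose m) *
      (pochhammer 1 k * pochhammer (- of_nat m) k / (pochhammer (of_nat (N - m + 1)) k * fact k) * z ^ k)
      = of_nat (N choose (m - k)) * (- z) ^ k" .
qed simp

lemma cubic_equation_has_fps_expansion:
  assumes "r > 0" and "A0 holomorphic_on ball 0 r" and "A0 0 = 0"
    and "\<forall>z\<in>ball 0 r. z * (1 + A0 z) ^ 3 = A0 z"
  obtains T where "A0 has_fps_expansion T" and "T $ 0 = 0" and "T = fps_X * (1 + T) ^ 3"
proof
  define T where "T = fps_expansion A0 0"
  show expansion: "A0 has_fps_expansion T"
    unfolding T_def using assms(1,2) by (intro has_fps_expansion_fps_expansion) auto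
  then show "T $ 0 = 0"
    using fps_nth_fps_expansion[of A0 T 0] assms(3) by simp
  have near_zero: "eventually (\<lambda>z. z * (1 + A0 z) ^ 3 = A0 z) (nhds 0)"
    unfolding eventually_nhds using assms(1,4) by (intro exI[of _ "ball 0 r"]) auto
  have "(\<lambda>z. z * (1 + A0 z) ^ 3) has_fps_expansion fps_X * (1 + T) ^ 3"
    by (intro has_fps_expansion_mult has_fps_expansion_power has_fps_expansion_add
        has_fps_expansion_fps_X has_fps_expansion_1 expansion)
  then have "A0 has_fps_expansion fps_X * (1 + T) ^ 3"
    using has_fps_expansion_cong[OF near_zero refl] by simp
  then show "T = fps_X * (1 + T) ^ 3"
    using expansion by (intro fps_ext) (simp only: fps_nth_fps_expansion)
qed

lemma A1coeff_eq_fps_compose: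
  assumes "A0 has_fps_expansion T" and "T $ 0 = 0"
  shows "A1coeff A0 n = (fps_X * ((1 + fps_X) * inverse (1 - 2 * fps_X)) ^ 4 oo T) $ n"
proof -
  define S where "S = fps_X * ((1 + fps_X) * inverse (1 - 2 * fps_X :: complex fps)) ^ 4"
  have "(\<lambda>w. w * ((1 + w) * inverse (1 - 2 * w)) ^ 4) has_fps_expansion S"
    unfolding S_def
    by (intro has_fps_expansion_mult has_fps_expansion_power has_fps_expansion_add
        has_fps_expansion_diff has_fps_expansion_inverse has_fps_expansion_fps_X
        has_fps_expansion_1 has_fps_expansion_numeral) simp_all
  from has_fps_expansion_compose[OF this assms]
  have "(\<lambda>z. - (A0 z * ((1 + A0 z) * inverse (1 - 2 * A0 z)) ^ 4)) has_fps_expansion - (S oo T)"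
    by (intro has_fps_expansion_minus) (simp add: o_def)
  moreover have "(\<lambda>z. - (A0 z * ((1 + A0 z) * inverse (1 - 2 * A0 z)) ^ 4)) = A1fun A0"
    by (simp add: fun_eq_iff A1fun_def divide_inverse)
  ultimately have "A1fun A0 has_fps_expansion - (S oo T)"
    by simp
  then have "(S oo T) $ n = - ((deriv ^^ n) (A1fun A0) 0 / fact n)"
    by (metis fps_nth_fps_expansion fps_neg_nth minus_minus)
  then show ?thesis
    unfolding A1coeff_def S_def by simp
qed

lemma Lagrange_inversion_cube:
  fixes T :: "'a::field_char_0 fps"
  assumes T0: "T $ 0 = 0" and T: "T = fps_X * (1 + T) ^ 3" and "n \<ge> 1"
  shows "(fps_X * ((1 + fps_X) * inverse (1 - 2 * fps_X)) ^ 4 oo T) $ n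
    = (fps_X * (1 + fps_X) ^ (3 * n + 3) * inverse (1 - 2 * fps_X) ^ 3) $ n"
proof -
  define Y :: "'a fps" where "Y = 1 + fps_X"
  define D :: "'a fps" where "D = inverse (1 - 2 * fps_X)"
  have D: "(1 - 2 * fps_X) * D = 1"
    unfolding D_def by (rule inverse_mult_eq_1') simp
  have Y_power: "Y ^ (3 * n + 3) = Y ^ 6 * (Y ^ 3) ^ (n - 1)"
  proof -
    have "3 * n + 3 = 6 + 3 * (n - 1)"
      using \<open>n \<ge> 1\<close> by simp
    then show ?thesis
      by (simp only: power_add power_mult)
  qed
  have Y_deriv: "fps_deriv (Y ^ 3) = 3 * Y ^ 2"
    by (simp add: Y_def fps_deriv_power')
  have kernel: "fps_X * (Y * D) ^ 4 * ((Y ^ 3) ^ (n - 1) * (Y ^ 3 - fps_X * fps_deriv (Y ^ 3)))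
      = fps_X * Y ^ (3 * n + 3) * D ^ 3"
  proof -
    \<comment> \<open>algebra cannot treat a power with symbolic exponent as an atom, hence the variable Q\<close>
    have "fps_X * (Y * D) ^ 4 * (Q * (Y ^ 3 - fps_X * (3 * Y ^ 2))) = fps_X * (Y ^ 6 * Q) * D ^ 3"
      for Q using D Y_def by algebra
    then show ?thesis
      unfolding Y_power Y_deriv .
  qed
  have "T = fps_X * (Y ^ 3 oo T)"
    by (subst T) (simp add: Y_def fps_compose_power[OF T0, symmetric] fps_compose_add_distrib T0)
  then have "(fps_X * (Y * D) ^ 4 oo T) $ n
      = (fps_X * (Y * D) ^ 4 * ((Y ^ 3) ^ (n - 1) * (Y ^ 3 - fps_X * fps_deriv (Y ^ 3)))) $ n"
    using T0 \<open>n \<ge> 1\<close> by (intro Lagrange_inversion) (simp_all add: Y_def)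
  also have "\<dots> = (fps_X * Y ^ (3 * n + 3) * D ^ 3) $ n"
    by (simp only: kernel)
  finally show ?thesis
    by (simp only: Y_def D_def)
qed

(* P = (8X - 1) (1 + X)^(3n+4) / (1 - 2X)^2 is a creative-telescoping certificate: the n-th
   coefficient of X P' - n P vanishes by fps_nth_X_mult_deriv_minus. *)
lemma telescoping_certificate:
  fixes n :: nat
  shows "fps_X * fps_deriv ((8 * fps_X - 1) * (1 + fps_X) ^ (3 * n + 4) * inverse (1 - 2 * fps_X) ^ 2)
      - of_nat n * ((8 * fps_X - 1) * (1 + fps_X) ^ (3 * n + 4) * inverse (1 - 2 * fps_X) ^ 2)
    = 18 * (fps_X * (1 + fps_X) ^ (3 * n + 3) * inverse (1 - 2 * fps_X) ^ 3)
      - fps_deriv ((1 + fps_X) ^ (3 * n + 4) * inverse (1 - 2 * fps_X))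
      + of_nat (4 * n + 6) * (1 + fps_X :: 'a::field_char_0 fps) ^ (3 * n + 3)"
proof -
  define Y :: "'a fps" where "Y = 1 + fps_X"
  define D :: "'a fps" where "D = inverse (1 - 2 * fps_X)"
  have D: "(1 - 2 * fps_X) * D = 1"
    unfolding D_def by (rule inverse_mult_eq_1') simp
  have D_deriv: "fps_deriv D = 2 * D ^ 2"
    unfolding D_def by (simp add: fps_inverse_deriv)
  have D2_deriv: "fps_deriv (D ^ 2) = 4 * D ^ 3"
    by (simp add: fps_deriv_power' D_deriv power2_eq_square power3_eq_cube)
  have Y_deriv: "fps_deriv (Y ^ (3 * n + 4)) = (3 * of_nat n + 4) * Y ^ (3 * n + 3)"
  proof -
    have "fps_deriv Y = 1"
      by (simp add: Y_def)
    then show ?thesis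
      by (simp add: fps_deriv_power' add.commute)
  qed
  have Y_power: "Y ^ (3 * n + 4) = Y ^ (3 * n + 3) * Y"
    by (simp add: add.commute flip: power_Suc2)
  have linear_deriv: "fps_deriv (8 * fps_X - 1 :: 'a fps) = 8"
    by simp
  have generic: "fps_X * ((8 * fps_X - 1) * (Q * Y) * (4 * D ^ 3) + ((8 * fps_X - 1) * ((3 * N + 4) * Q)
        + 8 * (Q * Y)) * D ^ 2) - N * ((8 * fps_X - 1) * (Q * Y) * D ^ 2)
      = 18 * (fps_X * Q * D ^ 3) - (Q * Y * (2 * D ^ 2) + (3 * N + 4) * Q * D) + (4 * N + 6) * Q"
    for Q N using D Y_def by algebra
  have "fps_X * fps_deriv ((8 * fps_X - 1) * Y ^ (3 * n + 4) * D ^ 2)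
      - of_nat n * ((8 * fps_X - 1) * Y ^ (3 * n + 4) * D ^ 2)
    = 18 * (fps_X * Y ^ (3 * n + 3) * D ^ 3) - fps_deriv (Y ^ (3 * n + 4) * D)
      + of_nat (4 * n + 6) * Y ^ (3 * n + 3)"
    unfolding fps_deriv_mult Y_deriv D_deriv D2_deriv linear_deriv
    unfolding Y_power of_nat_add of_nat_mult of_nat_numeral
    by (rule generic)
  then show ?thesis
    by (simp only: Y_def D_def)
qed

lemma fps_nth_Lagrange_coefficient_reduction:
  fixes n :: nat
  shows "18 * (fps_X * (1 + fps_X) ^ (3 * n + 3) * inverse (1 - 2 * fps_X) ^ 3) $ n
    = of_nat (n + 1) * ((1 + fps_X) ^ (3 * n + 4) * inverse (1 - 2 * fps_X)) $ (n + 1)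
      - of_nat (4 * n + 6) * ((1 + fps_X :: 'a::field_char_0 fps) ^ (3 * n + 3)) $ n"
proof -
  have "(18 * (fps_X * (1 + fps_X) ^ (3 * n + 3) * inverse (1 - 2 * fps_X) ^ 3)
      - fps_deriv ((1 + fps_X) ^ (3 * n + 4) * inverse (1 - 2 * fps_X))
      + of_nat (4 * n + 6) * (1 + fps_X :: 'a fps) ^ (3 * n + 3)) $ n = 0"
    by (simp only: fps_nth_X_mult_deriv_minus flip: telescoping_certificate)
  then show ?thesis
    by (simp only: fps_add_nth fps_sub_nth fps_deriv_nth fps_mult_left_const_nth
        numeral_fps_const flip: fps_of_nat) algebra
qed

lemma fps_nth_binomial_geometric_eq_gauss_hyp:
  "((1 + fps_X) ^ (3 * n + 4) * inverse (1 - 2 * fps_X) :: complex fps) $ (n + 1)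
    = of_nat ((3 * n + 4) choose (n + 1)) * gauss_hyp 1 (- of_nat (n + 1)) (of_nat (2 * n + 4)) (- 2)"
proof -
  have two: "2 = (fps_const 2 :: complex fps)"
    by simp
  have "((1 + fps_X) ^ (3 * n + 4) * inverse (1 - 2 * fps_X)) $ (n + 1)
      = (\<Sum>k\<le>n + 1. of_nat ((3 * n + 4) choose (n + 1 - k)) * (- (- 2)) ^ k :: complex)"
    unfolding two minus_minus by (rule fps_one_plus_X_power_mult_geometric_nth)
  also have "\<dots> = of_nat ((3 * n + 4) choose (n + 1))
      * gauss_hyp 1 (- of_nat (n + 1)) (of_nat (3 * n + 4 - (n + 1) + 1)) (- 2)"
    by (rule binomial_mult_gauss_hyp[symmetric]) simp
  also have "3 * n + 4 - (n + 1) + 1 = 2 * n + 4"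
    by simp
  finally show ?thesis .
qed

theorem proposition6:
  fixes A0 :: "complex \<Rightarrow> complex" and r :: real and n :: nat
  assumes "r > 0"
    and "A0 holomorphic_on ball 0 r"
    and "A0 0 = 0"
    and "\<forall>z\<in>ball 0 r. z * (1 + A0 z) ^ 3 = A0 z"
    and "n \<ge> 1"
  shows "A1coeff A0 n =
    of_nat (n + 1) / 18 * of_nat ((3 * n + 4) choose (n + 1)) *
    (gauss_hyp 1 (- of_nat (n + 1)) (of_nat (2 * n + 4)) (-2)
       - of_nat (4 * n + 6) / of_nat (3 * n + 4))"
proof -
  obtain T where T: "A0 has_fps_expansion T" "T $ 0 = 0" "T = fps_X * (1 + T) ^ 3"
    using cubic_equation_has_fps_expansion assms(1-4) by blast
  have coefficient: "18 * A1coeff A0 n = of_nat (n + 1) * ((1 + fps_X) ^ (3 * n + 4) * inverse (1 - 2 * fps_X)) $ (n + 1)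
      - of_nat (4 * n + 6) * of_nat ((3 * n + 3) choose n)"
    using A1coeff_eq_fps_compose[OF T(1,2)] Lagrange_inversion_cube[OF T(2,3) assms(5)]
      fps_nth_Lagrange_coefficient_reduction[of n] by (simp add: fps_one_plus_X_power_nth)
  have "(3 * n + 4) * ((3 * n + 3) choose n) = ((3 * n + 4) choose (n + 1)) * (n + 1)"
    using Suc_times_binomial_eq[of "3 * n + 3" n] by (simp add: add.commute)
  then have "of_nat (3 * n + 4) * of_nat ((3 * n + 3) choose n)
      = (of_nat ((3 * n + 4) choose (n + 1)) * of_nat (n + 1) :: complex)"
    by (metis of_nat_mult)
  then have binomial: "of_nat ((3 * n + 3) choose n)
      = (of_nat ((3 * n + 4) choose (n + 1)) * of_nat (n + 1) / of_nat (3 * n + 4) :: complex)"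
    by (simp only: eq_divide_eq of_nat_eq_0_iff mult.commute) simp
  show ?thesis
    using coefficient unfolding binomial fps_nth_binomial_geometric_eq_gauss_hyp by (simp add: field_simps del: of_nat_add of_nat_mult)
qed

end
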